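(* The functor $\text{Ab}_{\text{sT}}:\text{sTCom}\to\text{sAbGrp}$ is left adjoint to the functor $\text{U}_{\text{sT}}:\text{sAbGrp}\to\text{sTCom}$.
   Context: A simplicial $T$-complex is a simplicial set $X$ with a set of marked ("thin") simplices such that: (1) every degenerate simplex is thin; (2) for every horn $h:\Lambda^n_k\to X$ there is a unique filler $\text{fill}(h):\Delta^n\to X$ whose nondegenerate $n$-simplex is thin; (3) if all nondegenerate $(n-1)$-simplices of a horn are thin, then the $k$-th face of its thin filler is thin. Morphisms (forming $\text{sTCom}$) are simplicial maps preserving thin simplices. $\text{sAbGrp}$ is the category of simplicial abelian groups. For $A\in\text{sAbGrp}$, $\text{U}_{\text{sT}}(A)$ is the underlying simplicial set of $A$ with thin simplices the sums of degenerate simplices (this is a simplicial $T$-complex). For $X\in\text{sTCom}$, let $\eta:X\to\mathbb{Z}[X]$ be the canonical map to the free simplicial abelian group; then $\text{Ab}_{\text{sT}}(X)$ is the quotient of $\mathbb{Z}[X]$ by the simplicial subgroup generated by the elements $\text{fill}(\eta\circ h)-\eta\circ\text{fill}(h)$ for all horns $h:\Lambda^n_k\to X$, where $\text{fill}(\eta\circ h)$ is the thin filler of $\eta\circ h$ in $\text{U}_{\text{sT}}(\mathbb{Z}[X])$ and $\text{fill}(h)$ the thin filler of $h$ in $X$. *)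

theory Defs
  imports "HOL-Algebra.Algebra"
begin

text \<open>Convention: face n i maps level Suc n to level n (i \<le> Suc n);
  degen n i maps level n to level Suc n (i \<le> n).\<close>

definition is_sset :: "(nat \<Rightarrow> 'a set) \<Rightarrow> (nat \<Rightarrow> nat \<Rightarrow> 'a \<Rightarrow> 'a) \<Rightarrow> (nat \<Rightarrow> nat \<Rightarrow> 'a \<Rightarrow> 'a) \<Rightarrow> bool" where
  "is_sset S d s \<longleftrightarrow>
     (\<forall>n i x. i \<le> Suc n \<longrightarrow> x \<in> S (Suc n) \<longrightarrow> d n i x \<in> S n) \<and>
     (\<forall>n i x. i \<le> n \<longrightarrow> x \<in> S n \<longrightarrow> s n i x \<in> S (Suc n)) \<and>
     (\<forall>n i j x. i < j \<longrightarrow> j \<le> Suc (Suc n) \<longrightarrow> x \<in> S (Suc (Suc n)) \<longrightarrow>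
        d n i (d (Suc n) j x) = d n (j - 1) (d (Suc n) i x)) \<and>
     (\<forall>n i j x. i < j \<longrightarrow> j \<le> Suc n \<longrightarrow> x \<in> S (Suc n) \<longrightarrow>
        d (Suc n) i (s (Suc n) j x) = s n (j - 1) (d n i x)) \<and>
     (\<forall>n j x. j \<le> n \<longrightarrow> x \<in> S n \<longrightarrow> d n j (s n j x) = x \<and> d n (Suc j) (s n j x) = x) \<and>
     (\<forall>n i j x. j \<le> n \<longrightarrow> Suc j < i \<longrightarrow> i \<le> Suc (Suc n) \<longrightarrow> x \<in> S (Suc n) \<longrightarrow>
        d (Suc n) i (s (Suc n) j x) = s n j (d n (i - 1) x)) \<and>
     (\<forall>n i j x. i \<le> j \<longrightarrow> j \<le> n \<longrightarrow> x \<in> S n \<longrightarrow>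
        s (Suc n) i (s n j x) = s (Suc n) (Suc j) (s n i x))"

definition is_smap :: "(nat \<Rightarrow> 'a set) \<Rightarrow> (nat \<Rightarrow> nat \<Rightarrow> 'a \<Rightarrow> 'a) \<Rightarrow> (nat \<Rightarrow> nat \<Rightarrow> 'a \<Rightarrow> 'a) \<Rightarrow>
    (nat \<Rightarrow> 'b set) \<Rightarrow> (nat \<Rightarrow> nat \<Rightarrow> 'b \<Rightarrow> 'b) \<Rightarrow> (nat \<Rightarrow> nat \<Rightarrow> 'b \<Rightarrow> 'b) \<Rightarrow>
    (nat \<Rightarrow> 'a \<Rightarrow> 'b) \<Rightarrow> bool" where
  "is_smap S d s S' d' s' f \<longleftrightarrow>
     (\<forall>n. \<forall>x\<in>S n. f n x \<in> S' n) \<and>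
     (\<forall>n i x. i \<le> Suc n \<longrightarrow> x \<in> S (Suc n) \<longrightarrow> f n (d n i x) = d' n i (f (Suc n) x)) \<and>
     (\<forall>n i x. i \<le> n \<longrightarrow> x \<in> S n \<longrightarrow> f (Suc n) (s n i x) = s' n i (f n x))"

record 'a tcx =
  simp :: "nat \<Rightarrow> 'a set"
  face :: "nat \<Rightarrow> nat \<Rightarrow> 'a \<Rightarrow> 'a"
  degen :: "nat \<Rightarrow> nat \<Rightarrow> 'a \<Rightarrow> 'a"
  thin :: "nat \<Rightarrow> 'a set"

definition degenerate :: "'a tcx \<Rightarrow> nat \<Rightarrow> 'a \<Rightarrow> bool" where
  "degenerate K n x \<longleftrightarrow> (\<exists>m i y. n = Suc m \<and> i \<le> m \<and> y \<in> simp K m \<and> x = degen K m i y)"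

text \<open>A horn \<open>\<Lambda>^(Suc m)_k \<rightarrow> K\<close>, given (Yoneda) by its compatible family of
  m-simplices h i, i \<le> Suc m, i \<noteq> k.\<close>
definition is_horn :: "'a tcx \<Rightarrow> nat \<Rightarrow> nat \<Rightarrow> (nat \<Rightarrow> 'a) \<Rightarrow> bool" where
  "is_horn K m k h \<longleftrightarrow> k \<le> Suc m \<and>
     (\<forall>i \<le> Suc m. i \<noteq> k \<longrightarrow> h i \<in> simp K m) \<and>
     (\<forall>p i j. m = Suc p \<longrightarrow> i < j \<longrightarrow> j \<le> Suc m \<longrightarrow> i \<noteq> k \<longrightarrow> j \<noteq> k \<longrightarrow>
        face K p i (h j) = face K p (j - 1) (h i))"

definition is_filler :: "'a tcx \<Rightarrow> nat \<Rightarrow> nat \<Rightarrow> (nat \<Rightarrow> 'a) \<Rightarrow> 'a \<Rightarrow> bool" where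
  "is_filler K m k h x \<longleftrightarrow> x \<in> simp K (Suc m) \<and> (\<forall>i \<le> Suc m. i \<noteq> k \<longrightarrow> face K m i x = h i)"

definition fill :: "'a tcx \<Rightarrow> nat \<Rightarrow> nat \<Rightarrow> (nat \<Rightarrow> 'a) \<Rightarrow> 'a" where
  "fill K m k h = (THE x. is_filler K m k h x \<and> x \<in> thin K (Suc m))"

definition is_sTCom :: "'a tcx \<Rightarrow> bool" where
  "is_sTCom K \<longleftrightarrow> is_sset (simp K) (face K) (degen K) \<and>
     (\<forall>n. thin K n \<subseteq> simp K n) \<and> thin K 0 = {} \<and>
     (\<forall>n x. x \<in> simp K n \<longrightarrow> degenerate K n x \<longrightarrow> x \<in> thin K n) \<and>
     (\<forall>m k h. is_horn K m k h \<longrightarrow> (\<exists>!x. is_filler K m k h x \<and> x \<in> thin K (Suc m))) \<and>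
     (\<forall>m k h. is_horn K m k h \<longrightarrow>
        (\<forall>i \<le> Suc m. i \<noteq> k \<longrightarrow> \<not> degenerate K m (h i) \<longrightarrow> h i \<in> thin K m) \<longrightarrow>
        face K m k (fill K m k h) \<in> thin K m)"

definition sTCom_hom :: "'a tcx \<Rightarrow> 'b tcx \<Rightarrow> (nat \<Rightarrow> 'a \<Rightarrow> 'b) \<Rightarrow> bool" where
  "sTCom_hom K Y f \<longleftrightarrow> is_smap (simp K) (face K) (degen K) (simp Y) (face Y) (degen Y) f \<and>
     (\<forall>n. \<forall>x \<in> thin K n. f n x \<in> thin Y n)"

record 'a sab =
  lvl :: "nat \<Rightarrow> 'a monoid"
  sface :: "nat \<Rightarrow> nat \<Rightarrow> 'a \<Rightarrow> 'a"
  sdegen :: "nat \<Rightarrow> nat \<Rightarrow> 'a \<Rightarrow> 'a"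

definition is_sAbGrp :: "'a sab \<Rightarrow> bool" where
  "is_sAbGrp A \<longleftrightarrow> is_sset (\<lambda>n. carrier (lvl A n)) (sface A) (sdegen A) \<and>
     (\<forall>n. comm_group (lvl A n)) \<and>
     (\<forall>n i. i \<le> Suc n \<longrightarrow> sface A n i \<in> hom (lvl A (Suc n)) (lvl A n)) \<and>
     (\<forall>n i. i \<le> n \<longrightarrow> sdegen A n i \<in> hom (lvl A n) (lvl A (Suc n)))"

definition sAb_hom :: "'a sab \<Rightarrow> 'b sab \<Rightarrow> (nat \<Rightarrow> 'a \<Rightarrow> 'b) \<Rightarrow> bool" where
  "sAb_hom A B g \<longleftrightarrow>
     is_smap (\<lambda>n. carrier (lvl A n)) (sface A) (sdegen A) (\<lambda>n. carrier (lvl B n)) (sface B) (sdegen B) g \<and>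
     (\<forall>n. g n \<in> hom (lvl A n) (lvl B n))"

text \<open>Thin simplices of U_sT(A): (finite, nonempty) sums of degenerate simplices.
  In level 0 there are no degenerate simplices, hence no thin ones.\<close>
inductive_set degen_sums :: "'a sab \<Rightarrow> nat \<Rightarrow> 'a set" for A :: "'a sab" and n :: nat where
  degen: "n = Suc m \<Longrightarrow> i \<le> m \<Longrightarrow> x \<in> carrier (lvl A m) \<Longrightarrow> sdegen A m i x \<in> degen_sums A n"
| plus: "a \<in> degen_sums A n \<Longrightarrow> b \<in> degen_sums A n \<Longrightarrow> a \<otimes>\<^bsub>lvl A n\<^esub> b \<in> degen_sums A n"

definition U_sT :: "'a sab \<Rightarrow> 'a tcx" where
  "U_sT A = \<lparr>simp = (\<lambda>n. carrier (lvl A n)), face = sface A, degen = sdegen A,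
             thin = degen_sums A\<rparr>"

definition ZX_lvl :: "'a tcx \<Rightarrow> nat \<Rightarrow> ('a \<Rightarrow> int) monoid" where
  "ZX_lvl K n = \<lparr>carrier = {c. finite {x. c x \<noteq> 0} \<and> {x. c x \<noteq> 0} \<subseteq> simp K n},
                 monoid.mult = (\<lambda>c d x. c x + d x), monoid.one = (\<lambda>x. 0)\<rparr>"

definition lin :: "('a \<Rightarrow> 'a) \<Rightarrow> ('a \<Rightarrow> int) \<Rightarrow> ('a \<Rightarrow> int)" where
  "lin f c = (\<lambda>y. \<Sum>x \<in> {x. c x \<noteq> 0 \<and> f x = y}. c x)"

definition ZX :: "'a tcx \<Rightarrow> ('a \<Rightarrow> int) sab" where
  "ZX K = \<lparr>lvl = ZX_lvl K, sface = (\<lambda>n i. lin (face K n i)), sdegen = (\<lambda>n i. lin (degen K n i))\<rparr>"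

definition eta :: "'a \<Rightarrow> ('a \<Rightarrow> int)" where
  "eta x = (\<lambda>y. if y = x then 1 else 0)"

definition relgen :: "'a tcx \<Rightarrow> nat \<Rightarrow> ('a \<Rightarrow> int) set" where
  "relgen K n = {c. \<exists>m k h. n = Suc m \<and> is_horn K m k h \<and>
      c = (\<lambda>y. fill (U_sT (ZX K)) m k (\<lambda>i. eta (h i)) y - eta (fill K m k h) y)}"

definition Nsub :: "'a tcx \<Rightarrow> nat \<Rightarrow> ('a \<Rightarrow> int) set" where
  "Nsub K n = \<Inter> {S n | S. (\<forall>p. subgroup (S p) (ZX_lvl K p)) \<and>
      (\<forall>p i c. i \<le> Suc p \<longrightarrow> c \<in> S (Suc p) \<longrightarrow> sface (ZX K) p i c \<in> S p) \<and>
      (\<forall>p i c. i \<le> p \<longrightarrow> c \<in> S p \<longrightarrow> sdegen (ZX K) p i c \<in> S (Suc p)) \<and>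
      (\<forall>p. relgen K p \<subseteq> S p)}"

definition Ab_sT :: "'a tcx \<Rightarrow> ('a \<Rightarrow> int) set sab" where
  "Ab_sT K = \<lparr>lvl = (\<lambda>n. ZX_lvl K n Mod Nsub K n),
     sface = (\<lambda>n i C. Nsub K n #>\<^bsub>ZX_lvl K n\<^esub> sface (ZX K) n i (SOME c. c \<in> C)),
     sdegen = (\<lambda>n i C. Nsub K (Suc n) #>\<^bsub>ZX_lvl K (Suc n)\<^esub> sdegen (ZX K) n i (SOME c. c \<in> C))\<rparr>"

definition ab_unit :: "'a tcx \<Rightarrow> nat \<Rightarrow> 'a \<Rightarrow> ('a \<Rightarrow> int) set" where
  "ab_unit K n x = Nsub K n #>\<^bsub>ZX_lvl K n\<^esub> eta x"

end

theory Submission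
  imports Defs
begin

text \<open>
  Every horn in a simplicial abelian group A has exactly one filler that is a sum of degenerate
  simplices. Existence is Moore's argument: start from 0 and fix the faces one at a time by adding
  degenerate corrections. Uniqueness: composing the maps x \<mapsto> x - s_r d_j x gives a
  homomorphism that kills all degenerate simplices and fixes every simplex whose faces other than
  the k-th vanish, so two such fillers with the same faces agree.

  Ab_sT K is the quotient of the free simplicial abelian group Z[K] by the simplicial subgroup
  generated by the elements fill(\<eta> \<circ> h) - \<eta>(fill h). A thin simplex x of K is the thin
  filler of its own 0-horn, so \<eta> x is congruent to a sum of degenerate simplices; thus the unit
  preserves thin simplices. A T-map f : K \<rightarrow> U_sT A extends linearly to Z[K] \<rightarrow> A, and this
  extension sends fill(\<eta> \<circ> h) and \<eta>(fill h) to two thin fillers of the horn f \<circ> h, which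
  coincide by uniqueness. So the extension kills the relations and descends to Ab_sT K; it is
  unique because the simplices of K generate Z[K].
\<close>

context
  fixes S :: "nat \<Rightarrow> 'a set" and d s :: "nat \<Rightarrow> nat \<Rightarrow> 'a \<Rightarrow> 'a"
  assumes sset: "is_sset S d s"
begin

lemma sset_face_closed: "i \<le> Suc n \<Longrightarrow> x \<in> S (Suc n) \<Longrightarrow> d n i x \<in> S n"
  using sset by (simp add: is_sset_def)

lemma sset_degen_closed: "i \<le> n \<Longrightarrow> x \<in> S n \<Longrightarrow> s n i x \<in> S (Suc n)"
  using sset by (simp add: is_sset_def)

lemma sset_face_face:
  "i < j \<Longrightarrow> j \<le> Suc (Suc n) \<Longrightarrow> x \<in> S (Suc (Suc n)) \<Longrightarrow>
    d n i (d (Suc n) j x) = d n (j - 1) (d (Suc n) i x)"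
  using sset by (simp add: is_sset_def)

lemma sset_face_degen_less:
  "i < j \<Longrightarrow> j \<le> Suc n \<Longrightarrow> x \<in> S (Suc n) \<Longrightarrow>
    d (Suc n) i (s (Suc n) j x) = s n (j - 1) (d n i x)"
  using sset by (simp add: is_sset_def)

lemma sset_face_degen_same: "j \<le> n \<Longrightarrow> x \<in> S n \<Longrightarrow> d n j (s n j x) = x"
  using sset by (simp add: is_sset_def)

lemma sset_face_Suc_degen: "j \<le> n \<Longrightarrow> x \<in> S n \<Longrightarrow> d n (Suc j) (s n j x) = x"
  using sset by (simp add: is_sset_def)

lemma sset_face_degen_greater:
  "j \<le> n \<Longrightarrow> Suc j < i \<Longrightarrow> i \<le> Suc (Suc n) \<Longrightarrow> x \<in> S (Suc n) \<Longrightarrow>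
    d (Suc n) i (s (Suc n) j x) = s n j (d n (i - 1) x)"
  using sset by (simp add: is_sset_def)

lemma sset_degen_degen:
  "i \<le> j \<Longrightarrow> j \<le> n \<Longrightarrow> x \<in> S n \<Longrightarrow> s (Suc n) i (s n j x) = s (Suc n) (Suc j) (s n i x)"
  using sset by (simp add: is_sset_def)

end

lemma is_sset_image:
  assumes sset: "is_sset S d s" and f: "is_smap S d s S' d' s' f" and onto: "\<And>n. f n ` S n = S' n"
  shows "is_sset S' d' s'"
proof -
  have fd: "d' n i (f (Suc n) x) = f n (d n i x)" if "i \<le> Suc n" "x \<in> S (Suc n)" for n i x
    using f that by (simp add: is_smap_def)
  have fs: "s' n i (f n x) = f (Suc n) (s n i x)" if "i \<le> n" "x \<in> S n" for n i x
    using f that by (simp add: is_smap_def)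
  show ?thesis
    unfolding is_sset_def onto[symmetric]
    by (auto simp: fd fs sset_face_closed[OF sset] sset_degen_closed[OF sset]
        sset_face_face[OF sset] sset_face_degen_less[OF sset] sset_face_degen_same[OF sset]
        sset_face_Suc_degen[OF sset] sset_face_degen_greater[OF sset] sset_degen_degen[OF sset])
qed

locale simplicial_ab_group =
  fixes A :: "'c sab"
  assumes is_sAbGrp: "is_sAbGrp A"
begin

sublocale G: comm_group "lvl A n" for n
  using is_sAbGrp by (simp add: is_sAbGrp_def)

abbreviation G :: "nat \<Rightarrow> 'c monoid" where "G n \<equiv> lvl A n"
abbreviation d :: "nat \<Rightarrow> nat \<Rightarrow> 'c \<Rightarrow> 'c" where "d \<equiv> sface A"
abbreviation s :: "nat \<Rightarrow> nat \<Rightarrow> 'c \<Rightarrow> 'c" where "s \<equiv> sdegen A"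

lemma sset: "is_sset (\<lambda>n. carrier (G n)) d s"
  using is_sAbGrp by (simp add: is_sAbGrp_def)

lemmas face_face = sset_face_face[OF sset]
  and face_degen_less = sset_face_degen_less[OF sset]
  and face_degen_same = sset_face_degen_same[OF sset]
  and face_Suc_degen = sset_face_Suc_degen[OF sset]
  and face_degen_greater = sset_face_degen_greater[OF sset]
  and degen_degen = sset_degen_degen[OF sset]

lemma face_hom: "i \<le> Suc n \<Longrightarrow> d n i \<in> hom (G (Suc n)) (G n)"
  using is_sAbGrp by (simp add: is_sAbGrp_def)

lemma degen_hom: "i \<le> n \<Longrightarrow> s n i \<in> hom (G n) (G (Suc n))"
  using is_sAbGrp by (simp add: is_sAbGrp_def)

lemma face_group_hom: "i \<le> Suc n \<Longrightarrow> group_hom (G (Suc n)) (G n) (d n i)"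
  by (simp add: face_hom group_hom_axioms.intro group_hom_def)

lemma degen_group_hom: "i \<le> n \<Longrightarrow> group_hom (G n) (G (Suc n)) (s n i)"
  by (simp add: degen_hom group_hom_axioms.intro group_hom_def)

lemma face_closed [simp]: "i \<le> Suc n \<Longrightarrow> x \<in> carrier (G (Suc n)) \<Longrightarrow> d n i x \<in> carrier (G n)"
  by (rule hom_in_carrier[OF face_hom])

lemma degen_closed [simp]: "i \<le> n \<Longrightarrow> x \<in> carrier (G n) \<Longrightarrow> s n i x \<in> carrier (G (Suc n))"
  by (rule hom_in_carrier[OF degen_hom])

lemma face_mult [simp]:
  "i \<le> Suc n \<Longrightarrow> x \<in> carrier (G (Suc n)) \<Longrightarrow> y \<in> carrier (G (Suc n)) \<Longrightarrow>
    d n i (x \<otimes>\<^bsub>G (Suc n)\<^esub> y) = d n i x \<otimes>\<^bsub>G n\<^esub> d n i y"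
  by (rule hom_mult[OF face_hom])

lemma degen_mult [simp]:
  "i \<le> n \<Longrightarrow> x \<in> carrier (G n) \<Longrightarrow> y \<in> carrier (G n) \<Longrightarrow>
    s n i (x \<otimes>\<^bsub>G n\<^esub> y) = s n i x \<otimes>\<^bsub>G (Suc n)\<^esub> s n i y"
  by (rule hom_mult[OF degen_hom])

lemma face_one [simp]: "i \<le> Suc n \<Longrightarrow> d n i \<one>\<^bsub>G (Suc n)\<^esub> = \<one>\<^bsub>G n\<^esub>"
  by (rule group_hom.hom_one[OF face_group_hom])

lemma degen_one [simp]: "i \<le> n \<Longrightarrow> s n i \<one>\<^bsub>G n\<^esub> = \<one>\<^bsub>G (Suc n)\<^esub>"
  by (rule group_hom.hom_one[OF degen_group_hom])

lemma face_inv [simp]: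
  "i \<le> Suc n \<Longrightarrow> x \<in> carrier (G (Suc n)) \<Longrightarrow> d n i (inv\<^bsub>G (Suc n)\<^esub> x) = inv\<^bsub>G n\<^esub> d n i x"
  by (rule group_hom.hom_inv[OF face_group_hom])

lemma degen_inv [simp]:
  "i \<le> n \<Longrightarrow> x \<in> carrier (G n) \<Longrightarrow> s n i (inv\<^bsub>G n\<^esub> x) = inv\<^bsub>G (Suc n)\<^esub> s n i x"
  by (rule group_hom.hom_inv[OF degen_group_hom])

lemma degen_sums_carrier: "x \<in> degen_sums A n \<Longrightarrow> x \<in> carrier (G n)"
  by (induction rule: degen_sums.induct) simp_all

lemma one_degen_sums: "\<one>\<^bsub>G (Suc m)\<^esub> \<in> degen_sums A (Suc m)"
  using degen_sums.degen[of "Suc m" m 0 "\<one>\<^bsub>G m\<^esub>" A] by simp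

lemma degen_sums_inv: "x \<in> degen_sums A n \<Longrightarrow> inv\<^bsub>G n\<^esub> x \<in> degen_sums A n"
proof (induction rule: degen_sums.induct)
  case (degen m i x)
  then show ?case using degen_sums.degen[of n m i "inv\<^bsub>G m\<^esub> x" A] by simp
next
  case (plus a b)
  then show ?case
    using degen_sums.plus[OF plus.IH] by (simp add: degen_sums_carrier G.inv_mult)
qed

lemma sAb_hom_degen_sums:
  assumes \<phi>: "sAb_hom A B \<phi>" and x: "x \<in> degen_sums A n"
  shows "\<phi> n x \<in> degen_sums B n"
  using x
proof (induction rule: degen_sums.induct)
  case (degen m i x)
  then have "\<phi> (Suc m) (s m i x) = sdegen B m i (\<phi> m x)" "\<phi> m x \<in> carrier (lvl B m)"
    using \<phi> by (auto simp: sAb_hom_def is_smap_def)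
  then show ?case using degen by (auto intro: degen_sums.degen)
next
  case (plus a b)
  then have "\<phi> n (a \<otimes>\<^bsub>G n\<^esub> b) = \<phi> n a \<otimes>\<^bsub>lvl B n\<^esub> \<phi> n b"
    using \<phi> by (intro hom_mult) (auto simp: sAb_hom_def degen_sums_carrier)
  then show ?case using plus by (auto intro: degen_sums.plus)
qed

subsection \<open>Existence of thin horn fillers\<close>

lemma horn_U_sT_iff:
  "is_horn (U_sT A) m k y \<longleftrightarrow> k \<le> Suc m \<and>
     (\<forall>i \<le> Suc m. i \<noteq> k \<longrightarrow> y i \<in> carrier (G m)) \<and>
     (\<forall>p i j. m = Suc p \<longrightarrow> i < j \<longrightarrow> j \<le> Suc m \<longrightarrow> i \<noteq> k \<longrightarrow> j \<noteq> k \<longrightarrow>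
        d p i (y j) = d p (j - 1) (y i))"
  by (simp add: is_horn_def U_sT_def)

lemma horn_correction_face_below:
  assumes y: "is_horn (U_sT A) (Suc p) k y"
    and i: "i < r" "r \<le> Suc (Suc p)" "i \<noteq> k" "r \<noteq> k"
    and w: "w \<in> carrier (G (Suc (Suc p)))" "d (Suc p) i w = y i"
  shows "d p i (inv\<^bsub>G (Suc p)\<^esub> (d (Suc p) r w) \<otimes>\<^bsub>G (Suc p)\<^esub> y r) = \<one>\<^bsub>G p\<^esub>"
proof -
  have yr: "y r \<in> carrier (G (Suc p))" and yi: "y i \<in> carrier (G (Suc p))"
    using y i by (auto simp: horn_U_sT_iff)
  have "d p i (d (Suc p) r w) = d p (r - 1) (y i)"
    using face_face[OF i(1,2) w(1)] w(2) by simp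
  moreover have "d p i (y r) = d p (r - 1) (y i)"
    using y i by (simp add: horn_U_sT_iff)
  ultimately show ?thesis
    using i w yr yi by simp
qed

lemma horn_correction_face_above:
  assumes y: "is_horn (U_sT A) (Suc p) k y"
    and i: "r < i" "i \<le> Suc (Suc p)" "i \<noteq> k" "r \<noteq> k"
    and w: "w \<in> carrier (G (Suc (Suc p)))" "d (Suc p) i w = y i"
  shows "d p (i - 1) (inv\<^bsub>G (Suc p)\<^esub> (d (Suc p) r w) \<otimes>\<^bsub>G (Suc p)\<^esub> y r) = \<one>\<^bsub>G p\<^esub>"
proof -
  have yr: "y r \<in> carrier (G (Suc p))" and yi: "y i \<in> carrier (G (Suc p))"
    using y i by (auto simp: horn_U_sT_iff)
  have "d p (i - 1) (d (Suc p) r w) = d p r (y i)"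
    using face_face[OF i(1,2) w(1)] w(2) by simp
  moreover have "d p (i - 1) (y r) = d p r (y i)"
    using y i by (simp add: horn_U_sT_iff)
  ultimately show ?thesis
    using i w yr yi by simp
qed

text \<open>
  Adding s_j (d_r(w)^-1 y_r) to w corrects the r-th face; by the compatibility of the horn the
  correction has trivial i-th face for every i \<in> D.
\<close>

lemma horn_correction_step:
  assumes y: "is_horn (U_sT A) m k y"
    and r: "r \<le> Suc m" "r \<noteq> k" and j: "j \<le> m" "r = j \<or> r = Suc j"
    and w: "w \<in> degen_sums A (Suc m)" "\<forall>i\<in>D. d m i w = y i"
    and D: "\<forall>i\<in>D. i \<le> Suc m \<and> i \<noteq> k \<and> (i < j \<or> Suc j < i)"
  shows "\<exists>w'\<in>degen_sums A (Suc m). \<forall>i\<in>insert r D. d m i w' = y i"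
proof
  define c where "c = inv\<^bsub>G m\<^esub> (d m r w) \<otimes>\<^bsub>G m\<^esub> y r"
  have wc: "w \<in> carrier (G (Suc m))" using w(1) by (rule degen_sums_carrier)
  have yr: "y r \<in> carrier (G m)" using y r by (simp add: horn_U_sT_iff)
  have c: "c \<in> carrier (G m)" using wc yr r by (simp add: c_def)
  show "w \<otimes>\<^bsub>G (Suc m)\<^esub> s m j c \<in> degen_sums A (Suc m)"
    using w(1) j c by (blast intro: degen_sums.intros)
  have "d m r (w \<otimes>\<^bsub>G (Suc m)\<^esub> s m j c) = d m r w \<otimes>\<^bsub>G m\<^esub> d m r (s m j c)"
    using r wc j c by simp
  also have "d m r (s m j c) = c"
    using j c face_degen_same face_Suc_degen by auto
  also have "d m r w \<otimes>\<^bsub>G m\<^esub> c = y r"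
    using wc yr r by (simp add: c_def G.m_assoc[symmetric])
  finally have "d m r (w \<otimes>\<^bsub>G (Suc m)\<^esub> s m j c) = y r" .
  moreover have "d m i (w \<otimes>\<^bsub>G (Suc m)\<^esub> s m j c) = y i" if "i \<in> D" for i
  proof -
    have i: "i \<le> Suc m" "i \<noteq> k" "i < j \<or> Suc j < i" and wi: "d m i w = y i"
      using that w D by auto
    obtain p where p: "m = Suc p"
      using i j by (cases m) auto
    have "d m i (s m j c) = \<one>\<^bsub>G m\<^esub>"
      using i(3)
    proof
      assume "i < j"
      then have "d p i c = \<one>\<^bsub>G p\<^esub>"
        using horn_correction_face_below[of p k y i r w] y r j i wi wc p by (auto simp: c_def)
      then show ?thesis
        using face_degen_less[of i j p c] \<open>i < j\<close> j c p by simp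
    next
      assume "Suc j < i"
      then have "d p (i - 1) c = \<one>\<^bsub>G p\<^esub>"
        using horn_correction_face_above[of p k y r i w] y r j i wi wc p by (auto simp: c_def)
      then show ?thesis
        using face_degen_greater[of j p i c] \<open>Suc j < i\<close> i j c p by simp
    qed
    moreover have "y i \<in> carrier (G m)"
      using y i by (simp add: horn_U_sT_iff)
    ultimately show ?thesis
      using wi wc c i j by simp
  qed
  ultimately show "\<forall>i\<in>insert r D. d m i (w \<otimes>\<^bsub>G (Suc m)\<^esub> s m j c) = y i"
    by blast
qed

lemma horn_filler_below:
  assumes y: "is_horn (U_sT A) m k y" and "r \<le> k"
  shows "\<exists>w\<in>degen_sums A (Suc m). \<forall>i<r. d m i w = y i"
  using \<open>r \<le> k\<close>
proof (induction r)
  case 0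
  show ?case using one_degen_sums by blast
next
  case (Suc r)
  then obtain w where "w \<in> degen_sums A (Suc m)" "\<forall>i\<in>{..<r}. d m i w = y i"
    by auto
  moreover have "k \<le> Suc m" using y by (simp add: horn_U_sT_iff)
  ultimately have "\<exists>w'\<in>degen_sums A (Suc m). \<forall>i\<in>insert r {..<r}. d m i w' = y i"
    using Suc.prems by (intro horn_correction_step[OF y, where j = r]) auto
  then show ?case
    by (auto simp: less_Suc_eq)
qed

lemma horn_filler_exists:
  assumes y: "is_horn (U_sT A) m k y"
  shows "\<exists>w\<in>degen_sums A (Suc m). \<forall>i \<le> Suc m. i \<noteq> k \<longrightarrow> d m i w = y i"
proof -
  have k: "k \<le> Suc m" using y by (simp add: horn_U_sT_iff)
  have "t \<le> Suc m - k \<Longrightarrow>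
      \<exists>w\<in>degen_sums A (Suc m). \<forall>i\<in>{..<k} \<union> {Suc m - t<..Suc m}. d m i w = y i" for t
  proof (induction t)
    case 0
    then show ?case using horn_filler_below[OF y order_refl] by auto
  next
    case (Suc t)
    define r where "r = Suc m - t"
    obtain w where "w \<in> degen_sums A (Suc m)" "\<forall>i\<in>{..<k} \<union> {r<..Suc m}. d m i w = y i"
      using Suc by (auto simp: r_def)
    moreover have "k < r" "r \<le> Suc m" using Suc.prems by (auto simp: r_def)
    ultimately have "\<exists>w'\<in>degen_sums A (Suc m). \<forall>i\<in>insert r ({..<k} \<union> {r<..Suc m}). d m i w' = y i"
      by (intro horn_correction_step[OF y, where j = "r - 1"]) auto
    moreover have "insert r ({..<k} \<union> {r<..Suc m}) = {..<k} \<union> {Suc m - Suc t<..Suc m}"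
      using \<open>k < r\<close> \<open>r \<le> Suc m\<close> by (auto simp: r_def)
    ultimately show ?case by simp
  qed
  from this[of "Suc m - k"] obtain w where
    "w \<in> degen_sums A (Suc m)" "\<forall>i\<in>{..<k} \<union> {k<..Suc m}. d m i w = y i"
    using k by auto
  then show ?thesis
    by (auto simp: nat_neq_iff)
qed

end

subsection \<open>Uniqueness of thin horn fillers\<close>

text \<open>
  The map x \<mapsto> x - s_r d_j x kills s_r a when d_j s_r = id and fixes x when d_j x = 0.
  The composite horn_proj (j = r for r < k, then j = r + 1 for r = m down to k) kills
  every degenerate simplex and fixes every simplex whose faces other than the k-th vanish.
\<close>

definition kernel_proj :: "'c sab \<Rightarrow> nat \<Rightarrow> nat \<Rightarrow> nat \<Rightarrow> 'c \<Rightarrow> 'c" where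
  "kernel_proj A m r j x =
     x \<otimes>\<^bsub>lvl A (Suc m)\<^esub> inv\<^bsub>lvl A (Suc m)\<^esub> sdegen A m r (sface A m j x)"

primrec kernel_proj_low :: "'c sab \<Rightarrow> nat \<Rightarrow> nat \<Rightarrow> 'c \<Rightarrow> 'c" where
  "kernel_proj_low A m 0 x = x"
| "kernel_proj_low A m (Suc r) x = kernel_proj A m r r (kernel_proj_low A m r x)"

primrec kernel_proj_high :: "'c sab \<Rightarrow> nat \<Rightarrow> nat \<Rightarrow> 'c \<Rightarrow> 'c" where
  "kernel_proj_high A m 0 x = x"
| "kernel_proj_high A m (Suc t) x = kernel_proj A m (m - t) (Suc m - t) (kernel_proj_high A m t x)"

definition horn_proj :: "'c sab \<Rightarrow> nat \<Rightarrow> nat \<Rightarrow> 'c \<Rightarrow> 'c" where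
  "horn_proj A m k x = kernel_proj_high A m (Suc m - k) (kernel_proj_low A m k x)"

context simplicial_ab_group
begin

lemma kernel_proj_hom: "r \<le> m \<Longrightarrow> j \<le> Suc m \<Longrightarrow> kernel_proj A m r j \<in> hom (G (Suc m)) (G (Suc m))"
  by (rule homI) (simp_all add: kernel_proj_def G.inv_mult G.m_ac)

lemma kernel_proj_fixed: "r \<le> m \<Longrightarrow> j \<le> Suc m \<Longrightarrow> x \<in> carrier (G (Suc m)) \<Longrightarrow>
    d m j x = \<one>\<^bsub>G m\<^esub> \<Longrightarrow> kernel_proj A m r j x = x"
  by (simp add: kernel_proj_def)

lemma kernel_proj_degen: "r \<le> m \<Longrightarrow> a \<in> carrier (G m) \<Longrightarrow>
    d m j (s m r a) = a \<Longrightarrow> kernel_proj A m r j (s m r a) = \<one>\<^bsub>G (Suc m)\<^esub>"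
  by (simp add: kernel_proj_def)

lemma kernel_proj_degen_commute_low:
  assumes "r < j" "j \<le> Suc p" "b \<in> carrier (G (Suc p))"
  shows "kernel_proj A (Suc p) r r (s (Suc p) j b) = s (Suc p) j (kernel_proj A p r r b)"
proof -
  have "s (Suc p) r (d (Suc p) r (s (Suc p) j b)) = s (Suc p) j (s p r (d p r b))"
    using assms face_degen_less[of r j p b] degen_degen[of r "j - 1" p "d p r b"] by simp
  then show ?thesis
    using assms by (simp add: kernel_proj_def)
qed

lemma kernel_proj_degen_commute_high:
  assumes "Suc j < r" "r \<le> Suc (Suc p)" "b \<in> carrier (G (Suc p))"
  shows "kernel_proj A (Suc p) (r - 1) r (s (Suc p) j b) = s (Suc p) j (kernel_proj A p (r - 2) (r - 1) b)"
proof -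
  obtain q where q: "r = Suc (Suc q)" using assms(1) by (cases r; cases "r - 1") auto
  have "s (Suc p) (r - 1) (d (Suc p) r (s (Suc p) j b)) = s (Suc p) j (s p (r - 2) (d p (r - 1) b))"
    using assms q face_degen_greater[of j p r b] degen_degen[of j q p "d p (Suc q) b"] by simp
  then show ?thesis
    using assms q by (simp add: kernel_proj_def)
qed

lemma kernel_proj_low_hom: "r \<le> Suc m \<Longrightarrow> kernel_proj_low A m r \<in> hom (G (Suc m)) (G (Suc m))"
proof (induction r)
  case 0
  show ?case by (rule homI) simp_all
next
  case (Suc r)
  then show ?case
    using hom_compose[OF Suc.IH kernel_proj_hom, of r r] by (simp add: comp_def)
qed

lemma kernel_proj_high_hom: "kernel_proj_high A m t \<in> hom (G (Suc m)) (G (Suc m))"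
proof (induction t)
  case 0
  show ?case by (rule homI) simp_all
next
  case (Suc t)
  then show ?case
    using hom_compose[OF Suc.IH kernel_proj_hom, of "m - t" "Suc m - t"] by (simp add: comp_def)
qed

lemma horn_proj_hom: "k \<le> Suc m \<Longrightarrow> horn_proj A m k \<in> hom (G (Suc m)) (G (Suc m))"
  using hom_compose[OF kernel_proj_low_hom kernel_proj_high_hom]
  by (simp add: comp_def horn_proj_def[abs_def])

lemma kernel_proj_low_degen:
  assumes "r \<le> j" "j \<le> m" "a \<in> carrier (G m)"
  shows "\<exists>b\<in>carrier (G m). kernel_proj_low A m r (s m j a) = s m j b"
  using assms(1)
proof (induction r)
  case 0
  show ?case using assms by auto
next
  case (Suc r)
  then obtain b where b: "b \<in> carrier (G m)" "kernel_proj_low A m r (s m j a) = s m j b"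
    by auto
  obtain p where p: "m = Suc p"
    using Suc.prems assms(2) by (cases m) auto
  have "kernel_proj A p r r b \<in> carrier (G m)"
    using Suc.prems assms(2) b(1) p by (auto intro: hom_in_carrier[OF kernel_proj_hom])
  then show ?case
    using kernel_proj_degen_commute_low[of r j p b] b p Suc.prems assms(2) by auto
qed

lemma kernel_proj_high_degen:
  assumes "j + t \<le> m" "a \<in> carrier (G m)"
  shows "\<exists>b\<in>carrier (G m). kernel_proj_high A m t (s m j a) = s m j b"
  using assms(1)
proof (induction t)
  case 0
  show ?case using assms by auto
next
  case (Suc t)
  then obtain b where b: "b \<in> carrier (G m)" "kernel_proj_high A m t (s m j a) = s m j b"
    by auto
  obtain p where p: "m = Suc p"
    using Suc.prems by (cases m) auto
  define r where "r = Suc (Suc p) - t"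
  have r: "Suc j < r" "r \<le> Suc (Suc p)" "r - 1 = Suc p - t" "r - 2 = p - t"
    using Suc.prems p by (auto simp: r_def)
  have "kernel_proj A p (r - 2) (r - 1) b \<in> carrier (G m)"
    using r b(1) p by (auto intro: hom_in_carrier[OF kernel_proj_hom])
  then show ?case
    using kernel_proj_degen_commute_high[OF r(1,2), of b] b p r by (auto simp: r_def)
qed

lemma kernel_proj_low_kills:
  "j < r \<Longrightarrow> r \<le> Suc m \<Longrightarrow> a \<in> carrier (G m) \<Longrightarrow> kernel_proj_low A m r (s m j a) = \<one>\<^bsub>G (Suc m)\<^esub>"
proof (induction r)
  case 0
  then show ?case by simp
next
  case (Suc r)
  show ?case
  proof (cases "j < r")
    case True
    then show ?thesis using Suc by (simp add: kernel_proj_def)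
  next
    case False
    then have "j = r" "r \<le> m" using Suc.prems by auto
    then obtain b where "b \<in> carrier (G m)" "kernel_proj_low A m r (s m r a) = s m r b"
      using kernel_proj_low_degen[of r r m a] Suc.prems by auto
    then show ?thesis
      using \<open>j = r\<close> \<open>r \<le> m\<close> by (simp add: kernel_proj_degen face_degen_same)
  qed
qed

lemma kernel_proj_high_kills:
  "m < j + t \<Longrightarrow> j \<le> m \<Longrightarrow> a \<in> carrier (G m) \<Longrightarrow> kernel_proj_high A m t (s m j a) = \<one>\<^bsub>G (Suc m)\<^esub>"
proof (induction t)
  case 0
  then show ?case by simp
next
  case (Suc t)
  show ?case
  proof (cases "m < j + t")
    case True
    then show ?thesis using Suc by (simp add: kernel_proj_def)
  next
    case False
    then have jt: "j + t = m" using Suc.prems by simp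
    then obtain b where "b \<in> carrier (G m)" "kernel_proj_high A m t (s m j a) = s m j b"
      using kernel_proj_high_degen[of j t m a] Suc.prems by auto
    moreover have "m - t = j" "Suc m - t = Suc j" using jt by auto
    ultimately show ?thesis
      using Suc.prems by (simp add: kernel_proj_degen face_Suc_degen)
  qed
qed

lemma horn_proj_degen:
  assumes "k \<le> Suc m" "j \<le> m" "a \<in> carrier (G m)"
  shows "horn_proj A m k (s m j a) = \<one>\<^bsub>G (Suc m)\<^esub>"
proof (cases "j < k")
  case True
  have "kernel_proj_high A m t \<one>\<^bsub>G (Suc m)\<^esub> = \<one>\<^bsub>G (Suc m)\<^esub>" for t
    by (induction t) (simp_all add: kernel_proj_def)
  then show ?thesis
    using True assms by (simp add: horn_proj_def kernel_proj_low_kills)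
next
  case False
  then obtain b where "b \<in> carrier (G m)" "kernel_proj_low A m k (s m j a) = s m j b"
    using kernel_proj_low_degen[of k j m a] assms by auto
  then show ?thesis
    using False assms by (simp add: horn_proj_def kernel_proj_high_kills)
qed

lemma horn_proj_degen_sums:
  assumes "x \<in> degen_sums A (Suc m)" "k \<le> Suc m"
  shows "horn_proj A m k x = \<one>\<^bsub>G (Suc m)\<^esub>"
proof -
  have "x \<in> degen_sums A n \<Longrightarrow> n = Suc m \<Longrightarrow> horn_proj A m k x = \<one>\<^bsub>G (Suc m)\<^esub>" for n
  proof (induction rule: degen_sums.induct)
    case (degen m' i x)
    then show ?case using assms(2) by (simp add: horn_proj_degen)
  next
    case (plus a b)
    then show ?case
      using hom_mult[OF horn_proj_hom[OF assms(2)]] by (simp add: degen_sums_carrier)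
  qed
  then show ?thesis using assms(1) by blast
qed

lemma horn_proj_fixed:
  assumes "k \<le> Suc m" "x \<in> carrier (G (Suc m))" "\<forall>i \<le> Suc m. i \<noteq> k \<longrightarrow> d m i x = \<one>\<^bsub>G m\<^esub>"
  shows "horn_proj A m k x = x"
proof -
  have "kernel_proj_low A m r x = x" if "r \<le> k" for r
    using that by (induction r) (use assms in \<open>simp_all add: kernel_proj_fixed\<close>)
  moreover have "kernel_proj_high A m t x = x" if "t \<le> Suc m - k" for t
    using that by (induction t) (use assms in \<open>simp_all add: kernel_proj_fixed\<close>)
  ultimately show ?thesis
    by (simp add: horn_proj_def)
qed

lemma degen_sums_eq_if_faces_eq:
  assumes "x \<in> degen_sums A (Suc m)" "x' \<in> degen_sums A (Suc m)" "k \<le> Suc m"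
    and faces: "\<forall>i \<le> Suc m. i \<noteq> k \<longrightarrow> d m i x = d m i x'"
  shows "x = x'"
proof -
  define z where "z = x \<otimes>\<^bsub>G (Suc m)\<^esub> inv\<^bsub>G (Suc m)\<^esub> x'"
  have xc: "x \<in> carrier (G (Suc m))" "x' \<in> carrier (G (Suc m))"
    using assms degen_sums_carrier by auto
  have "z \<in> degen_sums A (Suc m)"
    unfolding z_def using assms(1,2) by (blast intro: degen_sums.plus degen_sums_inv)
  then have "horn_proj A m k z = \<one>\<^bsub>G (Suc m)\<^esub>"
    using assms(3) by (rule horn_proj_degen_sums)
  moreover have "horn_proj A m k z = z"
    using assms(3) faces xc by (intro horn_proj_fixed) (auto simp: z_def)
  ultimately have "x \<otimes>\<^bsub>G (Suc m)\<^esub> inv\<^bsub>G (Suc m)\<^esub> x' = \<one>\<^bsub>G (Suc m)\<^esub>"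
    by (simp add: z_def)
  then show ?thesis
    using xc by (metis G.inv_closed G.inv_equality G.inv_inv)
qed

lemma U_sT_thin_filler_unique:
  assumes "is_horn (U_sT A) m k h"
  shows "\<exists>!x. is_filler (U_sT A) m k h x \<and> x \<in> thin (U_sT A) (Suc m)"
proof -
  have thin_filler_iff: "is_filler (U_sT A) m k h x \<and> x \<in> thin (U_sT A) (Suc m) \<longleftrightarrow>
      x \<in> degen_sums A (Suc m) \<and> (\<forall>i \<le> Suc m. i \<noteq> k \<longrightarrow> d m i x = h i)" for x
    by (auto simp: is_filler_def U_sT_def degen_sums_carrier)
  have "k \<le> Suc m" using assms by (simp add: horn_U_sT_iff)
  then show ?thesis
    unfolding thin_filler_iff
    using horn_filler_exists[OF assms] degen_sums_eq_if_faces_eq by metis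
qed

lemma fill_U_sT:
  assumes "is_horn (U_sT A) m k h"
  shows "fill (U_sT A) m k h \<in> degen_sums A (Suc m)"
    and "\<forall>i \<le> Suc m. i \<noteq> k \<longrightarrow> d m i (fill (U_sT A) m k h) = h i"
  using theI'[OF U_sT_thin_filler_unique[OF assms]]
  by (auto simp: fill_def is_filler_def U_sT_def)

end

section \<open>Quotients by simplicial subgroups\<close>

lemma hom_descend:
  assumes "group G" and f: "f \<in> hom G H" "f ` carrier G = carrier H"
    and L: "L \<in> hom G G'" and f': "f' \<in> hom G' H'"
    and commute: "\<And>x. x \<in> carrier G \<Longrightarrow> L' (f x) = f' (L x)"
  shows "L' \<in> hom H H'"
proof (rule homI)
  fix y assume "y \<in> carrier H"
  then obtain x where "x \<in> carrier G" "y = f x" using f(2) by blast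
  then show "L' y \<in> carrier H'"
    using commute hom_in_carrier[OF f'] hom_in_carrier[OF L] by simp
next
  fix y y' assume "y \<in> carrier H" "y' \<in> carrier H"
  then obtain x x' where x: "x \<in> carrier G" "y = f x" and x': "x' \<in> carrier G" "y' = f x'"
    using f(2) by blast
  have "x \<otimes>\<^bsub>G\<^esub> x' \<in> carrier G"
    using x x' \<open>group G\<close> by (simp add: group.subgroupE(4) group.subgroup_self)
  moreover have "y \<otimes>\<^bsub>H\<^esub> y' = f (x \<otimes>\<^bsub>G\<^esub> x')"
    using x x' hom_mult[OF f(1)] by simp
  ultimately have "L' (y \<otimes>\<^bsub>H\<^esub> y') = f' (L (x \<otimes>\<^bsub>G\<^esub> x'))"
    using commute by simp
  then show "L' (y \<otimes>\<^bsub>H\<^esub> y') = L' y \<otimes>\<^bsub>H'\<^esub> L' y'"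
    using x x' commute hom_mult[OF f'] hom_mult[OF L] hom_in_carrier[OF L] by simp
qed

definition simplicial_subgroup :: "'b sab \<Rightarrow> (nat \<Rightarrow> 'b set) \<Rightarrow> bool" where
  "simplicial_subgroup B N \<longleftrightarrow> (\<forall>n. subgroup (N n) (lvl B n)) \<and>
     (\<forall>n i c. i \<le> Suc n \<longrightarrow> c \<in> N (Suc n) \<longrightarrow> sface B n i c \<in> N n) \<and>
     (\<forall>n i c. i \<le> n \<longrightarrow> c \<in> N n \<longrightarrow> sdegen B n i c \<in> N (Suc n))"

definition quotient_sab :: "'b sab \<Rightarrow> (nat \<Rightarrow> 'b set) \<Rightarrow> 'b set sab" where
  "quotient_sab B N = \<lparr>lvl = (\<lambda>n. lvl B n Mod N n),
     sface = (\<lambda>n i C. N n #>\<^bsub>lvl B n\<^esub> sface B n i (SOME c. c \<in> C)),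
     sdegen = (\<lambda>n i C. N (Suc n) #>\<^bsub>lvl B (Suc n)\<^esub> sdegen B n i (SOME c. c \<in> C))\<rparr>"

text \<open>The representative chosen by SOME is irrelevant as soon as \<phi> kills N (lemma induced_hom_coset).\<close>

definition induced_hom :: "(nat \<Rightarrow> 'b \<Rightarrow> 'c) \<Rightarrow> nat \<Rightarrow> 'b set \<Rightarrow> 'c" where
  "induced_hom \<phi> n C = \<phi> n (SOME c. c \<in> C)"

lemma (in simplicial_ab_group) simplicial_subgroup_kernel:
  assumes B: "is_sAbGrp B" and \<phi>: "sAb_hom B A \<phi>"
  shows "simplicial_subgroup B (\<lambda>n. kernel (lvl B n) (G n) (\<phi> n))"
proof -
  have "group_hom (lvl B n) (G n) (\<phi> n)" for n
    using B \<phi> by (simp add: group_hom_def group_hom_axioms_def sAb_hom_def is_sAbGrp_def comm_group_def)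
  moreover have "\<phi> n (sface B n i c) = d n i (\<phi> (Suc n) c)"
    if "i \<le> Suc n" "c \<in> carrier (lvl B (Suc n))" for n i c
    using \<phi> that by (simp add: sAb_hom_def is_smap_def)
  moreover have "\<phi> (Suc n) (sdegen B n i c) = s n i (\<phi> n c)"
    if "i \<le> n" "c \<in> carrier (lvl B n)" for n i c
    using \<phi> that by (simp add: sAb_hom_def is_smap_def)
  moreover have "sface B n i c \<in> carrier (lvl B n)" if "i \<le> Suc n" "c \<in> carrier (lvl B (Suc n))" for n i c
    using B that by (simp add: is_sAbGrp_def is_sset_def)
  moreover have "sdegen B n i c \<in> carrier (lvl B (Suc n))" if "i \<le> n" "c \<in> carrier (lvl B n)" for n i c
    using B that by (simp add: is_sAbGrp_def is_sset_def)
  ultimately show ?thesis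
    unfolding simplicial_subgroup_def
    by (auto simp: group_hom.subgroup_kernel) (auto simp: kernel_def)
qed

locale simplicial_quotient = simplicial_ab_group B for B :: "'b sab" +
  fixes N :: "nat \<Rightarrow> 'b set"
  assumes simplicial_subgroup: "simplicial_subgroup B N"
begin

lemma subgroup: "subgroup (N n) (G n)"
  using simplicial_subgroup by (simp add: simplicial_subgroup_def)

lemma face_mem: "i \<le> Suc n \<Longrightarrow> c \<in> N (Suc n) \<Longrightarrow> d n i c \<in> N n"
  using simplicial_subgroup by (simp add: simplicial_subgroup_def)

lemma degen_mem: "i \<le> n \<Longrightarrow> c \<in> N n \<Longrightarrow> s n i c \<in> N (Suc n)"
  using simplicial_subgroup by (simp add: simplicial_subgroup_def)

lemma normal: "N n \<lhd> G n"
  by (rule G.subgroup_imp_normal[OF subgroup])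

lemma coset_hom: "(\<lambda>c. N n #>\<^bsub>G n\<^esub> c) \<in> hom (G n) (lvl (quotient_sab B N) n)"
  using normal.r_coset_hom_Mod[OF normal] by (simp add: quotient_sab_def)

lemma quotient_carrier: "(\<lambda>c. N n #>\<^bsub>G n\<^esub> c) ` carrier (G n) = carrier (lvl (quotient_sab B N) n)"
  by (simp add: quotient_sab_def carrier_FactGroup)

lemma coset_some_rep:
  assumes L: "L \<in> hom (G a) (G b)" "\<And>h. h \<in> N a \<Longrightarrow> L h \<in> N b" and c: "c \<in> carrier (G a)"
  shows "N b #>\<^bsub>G b\<^esub> L (SOME c'. c' \<in> N a #>\<^bsub>G a\<^esub> c) = N b #>\<^bsub>G b\<^esub> L c"
proof -
  have "(SOME c'. c' \<in> N a #>\<^bsub>G a\<^esub> c) \<in> N a #>\<^bsub>G a\<^esub> c"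
    using G.rcos_self[OF c subgroup] by (rule someI)
  then obtain h where h: "h \<in> N a" "(SOME c'. c' \<in> N a #>\<^bsub>G a\<^esub> c) = h \<otimes>\<^bsub>G a\<^esub> c"
    unfolding r_coset_def by auto
  have hc: "h \<in> carrier (G a)" by (rule subgroup.mem_carrier[OF subgroup h(1)])
  have "N b #>\<^bsub>G b\<^esub> (L h \<otimes>\<^bsub>G b\<^esub> L c) = (N b #>\<^bsub>G b\<^esub> L h) #>\<^bsub>G b\<^esub> L c"
    using hom_in_carrier[OF L(1)] hc c G.coset_mult_assoc[OF subgroup.subset[OF subgroup]] by simp
  also have "N b #>\<^bsub>G b\<^esub> L h = N b"
    using L h(1) hc hom_in_carrier[OF L(1)] by (intro G.coset_join2 subgroup) auto
  finally show ?thesis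
    using h(2) hom_mult[OF L(1) hc c] by simp
qed

lemma quotient_face_coset:
  assumes "i \<le> Suc n" "c \<in> carrier (G (Suc n))"
  shows "sface (quotient_sab B N) n i (N (Suc n) #>\<^bsub>G (Suc n)\<^esub> c) = N n #>\<^bsub>G n\<^esub> d n i c"
  using coset_some_rep[OF face_hom face_mem] assms by (simp add: quotient_sab_def)

lemma quotient_degen_coset:
  assumes "i \<le> n" "c \<in> carrier (G n)"
  shows "sdegen (quotient_sab B N) n i (N n #>\<^bsub>G n\<^esub> c) = N (Suc n) #>\<^bsub>G (Suc n)\<^esub> s n i c"
  using coset_some_rep[OF degen_hom degen_mem] assms by (simp add: quotient_sab_def)

lemma sAb_hom_coset: "sAb_hom B (quotient_sab B N) (\<lambda>n c. N n #>\<^bsub>G n\<^esub> c)"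
  using hom_in_carrier[OF coset_hom]
  by (simp add: sAb_hom_def is_smap_def coset_hom quotient_face_coset quotient_degen_coset)

lemma is_sAbGrp_quotient: "is_sAbGrp (quotient_sab B N)"
  unfolding is_sAbGrp_def
proof (intro conjI allI impI)
  show "is_sset (\<lambda>n. carrier (lvl (quotient_sab B N) n)) (sface (quotient_sab B N)) (sdegen (quotient_sab B N))"
    using is_sset_image[OF sset _ quotient_carrier] sAb_hom_coset by (simp add: sAb_hom_def)
  show "comm_group (lvl (quotient_sab B N) n)" for n
    using G.abelian_FactGroup[OF subgroup] by (simp add: quotient_sab_def)
  show "sface (quotient_sab B N) n i \<in> hom (lvl (quotient_sab B N) (Suc n)) (lvl (quotient_sab B N) n)"
    if "i \<le> Suc n" for n i
  proof (rule hom_descend[OF G.is_group coset_hom quotient_carrier face_hom[OF that] coset_hom])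
    fix x assume "x \<in> carrier (G (Suc n))"
    then show "sface (quotient_sab B N) n i (N (Suc n) #>\<^bsub>G (Suc n)\<^esub> x) = N n #>\<^bsub>G n\<^esub> d n i x"
      using that by (simp add: quotient_face_coset)
  qed
  show "sdegen (quotient_sab B N) n i \<in> hom (lvl (quotient_sab B N) n) (lvl (quotient_sab B N) (Suc n))"
    if "i \<le> n" for n i
  proof (rule hom_descend[OF G.is_group coset_hom quotient_carrier degen_hom[OF that] coset_hom])
    fix x assume "x \<in> carrier (G n)"
    then show "sdegen (quotient_sab B N) n i (N n #>\<^bsub>G n\<^esub> x) = N (Suc n) #>\<^bsub>G (Suc n)\<^esub> s n i x"
      using that by (simp add: quotient_degen_coset)
  qed
qed

context
  fixes A :: "'c sab" and \<phi> :: "nat \<Rightarrow> 'b \<Rightarrow> 'c"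
  assumes A: "is_sAbGrp A" and \<phi>: "sAb_hom B A \<phi>" and kills: "\<And>n c. c \<in> N n \<Longrightarrow> \<phi> n c = \<one>\<^bsub>lvl A n\<^esub>"
begin

lemma induced_hom_coset:
  assumes c: "c \<in> carrier (G n)"
  shows "induced_hom \<phi> n (N n #>\<^bsub>G n\<^esub> c) = \<phi> n c"
proof -
  have \<phi>n: "\<phi> n \<in> hom (G n) (lvl A n)" using \<phi> by (simp add: sAb_hom_def)
  have "(SOME c'. c' \<in> N n #>\<^bsub>G n\<^esub> c) \<in> N n #>\<^bsub>G n\<^esub> c"
    using G.rcos_self[OF c subgroup] by (rule someI)
  then obtain h where h: "h \<in> N n" "(SOME c'. c' \<in> N n #>\<^bsub>G n\<^esub> c) = h \<otimes>\<^bsub>G n\<^esub> c"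
    unfolding r_coset_def by auto
  have "h \<in> carrier (G n)" by (rule subgroup.mem_carrier[OF subgroup h(1)])
  then show ?thesis
    using h hom_mult[OF \<phi>n _ c] kills hom_in_carrier[OF \<phi>n c] A
    by (simp add: induced_hom_def is_sAbGrp_def comm_group_def group.is_monoid)
qed

lemma sAb_hom_induced: "sAb_hom (quotient_sab B N) A (induced_hom \<phi>)"
proof -
  have \<phi>n: "\<phi> n \<in> hom (G n) (lvl A n)" for n using \<phi> by (simp add: sAb_hom_def)
  have id: "(\<lambda>x. x) \<in> hom (lvl A n) (lvl A n)" for n by (rule homI) simp_all
  have "is_smap (\<lambda>n. carrier (G n)) d s (\<lambda>n. carrier (lvl A n)) (sface A) (sdegen A) \<phi>"
    using \<phi> by (simp add: sAb_hom_def)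
  then show ?thesis
    unfolding sAb_hom_def is_smap_def quotient_carrier[symmetric]
    using hom_in_carrier[OF \<phi>n]
    by (auto simp: induced_hom_coset quotient_face_coset quotient_degen_coset
        intro!: hom_descend[OF G.is_group coset_hom quotient_carrier \<phi>n id])
qed

end

end

section \<open>The free simplicial abelian group\<close>

lemma ZX_carrier_iff: "c \<in> carrier (ZX_lvl K n) \<longleftrightarrow> finite {x. c x \<noteq> 0} \<and> {x. c x \<noteq> 0} \<subseteq> simp K n"
  by (simp add: ZX_lvl_def)

lemma ZX_mult [simp]: "c \<otimes>\<^bsub>ZX_lvl K n\<^esub> c' = (\<lambda>x. c x + c' x)"
  by (simp add: ZX_lvl_def)

lemma ZX_one [simp]: "\<one>\<^bsub>ZX_lvl K n\<^esub> = (\<lambda>x. 0)"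
  by (simp add: ZX_lvl_def)

lemma comm_group_ZX_lvl: "comm_group (ZX_lvl K n)"
proof (rule comm_groupI)
  fix c c' assume "c \<in> carrier (ZX_lvl K n)" "c' \<in> carrier (ZX_lvl K n)"
  moreover have "{x. c x + c' x \<noteq> 0} \<subseteq> {x. c x \<noteq> 0} \<union> {x. c' x \<noteq> 0}" by auto
  ultimately show "c \<otimes>\<^bsub>ZX_lvl K n\<^esub> c' \<in> carrier (ZX_lvl K n)"
    unfolding ZX_carrier_iff ZX_mult by (auto intro: finite_subset)
next
  fix c assume "c \<in> carrier (ZX_lvl K n)"
  then show "\<exists>c'\<in>carrier (ZX_lvl K n). c' \<otimes>\<^bsub>ZX_lvl K n\<^esub> c = \<one>\<^bsub>ZX_lvl K n\<^esub>"
    by (intro bexI[of _ "\<lambda>x. - c x"]) (auto simp: ZX_carrier_iff)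
qed (auto simp: ZX_carrier_iff add.assoc add.commute)

interpretation ZX_lvl: comm_group "ZX_lvl K n" for K n
  by (rule comm_group_ZX_lvl)

lemma ZX_inv: "c \<in> carrier (ZX_lvl K n) \<Longrightarrow> inv\<^bsub>ZX_lvl K n\<^esub> c = (\<lambda>x. - c x)"
  by (rule ZX_lvl.inv_equality) (auto simp: ZX_carrier_iff)

lemma eta_in_ZX: "x \<in> simp K n \<Longrightarrow> eta x \<in> carrier (ZX_lvl K n)"
proof -
  have "{y. eta x y \<noteq> 0} = {x}" by (auto simp: eta_def)
  then show "x \<in> simp K n \<Longrightarrow> ?thesis" by (simp add: ZX_carrier_iff)
qed

lemma eta_int_pow:
  assumes x: "x \<in> simp K n"
  shows "eta x [^]\<^bsub>ZX_lvl K n\<^esub> (a::int) = (\<lambda>y. if y = x then a else 0)"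
proof -
  have nat_pow: "eta x [^]\<^bsub>ZX_lvl K n\<^esub> (k::nat) = (\<lambda>y. if y = x then int k else 0)" for k
    by (induction k) (auto simp: eta_def)
  show ?thesis
  proof (cases "a < 0")
    case True
    have "eta x [^]\<^bsub>ZX_lvl K n\<^esub> nat (- a) \<in> carrier (ZX_lvl K n)"
      using eta_in_ZX[OF x] by simp
    then show ?thesis
      using True by (simp add: int_pow_def2 ZX_inv nat_pow) (auto simp: fun_eq_iff)
  next
    case False
    then show ?thesis by (simp add: int_pow_def2 nat_pow fun_eq_iff)
  qed
qed

lemma ZX_hom_eqI:
  assumes "group H" and \<phi>: "\<phi> \<in> hom (ZX_lvl K n) H" and \<psi>: "\<psi> \<in> hom (ZX_lvl K n) H"
    and eta: "\<And>x. x \<in> simp K n \<Longrightarrow> \<phi> (eta x) = \<psi> (eta x)"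
    and c: "c \<in> carrier (ZX_lvl K n)"
  shows "\<phi> c = \<psi> c"
proof -
  have gh: "group_hom (ZX_lvl K n) H \<phi>" "group_hom (ZX_lvl K n) H \<psi>"
    using \<open>group H\<close> \<phi> \<psi> by (simp_all add: group_hom_def group_hom_axioms_def)
  have "finite S \<Longrightarrow> \<forall>c\<in>carrier (ZX_lvl K n). {x. c x \<noteq> 0} \<subseteq> S \<longrightarrow> \<phi> c = \<psi> c" for S
  proof (induction S rule: finite_induct)
    case empty
    then show ?case
      using group_hom.hom_one[OF gh(1)] group_hom.hom_one[OF gh(2)] by (auto simp: fun_eq_iff)
  next
    case (insert x S)
    show ?case
    proof (intro ballI impI)
      fix c assume c: "c \<in> carrier (ZX_lvl K n)" and supp: "{x. c x \<noteq> 0} \<subseteq> insert x S"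
      show "\<phi> c = \<psi> c"
      proof (cases "c x = 0")
        case True
        then show ?thesis using insert.IH c supp by blast
      next
        case False
        then have x: "x \<in> simp K n" using c by (auto simp: ZX_carrier_iff)
        define c' a where "c' = c(x := 0)" and "a = c x"
        have c': "c' \<in> carrier (ZX_lvl K n)" "{y. c' y \<noteq> 0} \<subseteq> S"
          using c supp by (auto simp: c'_def ZX_carrier_iff elim: finite_subset[rotated])
        have pow: "eta x [^]\<^bsub>ZX_lvl K n\<^esub> a \<in> carrier (ZX_lvl K n)"
          using eta_in_ZX[OF x] by simp
        have split: "c = c' \<otimes>\<^bsub>ZX_lvl K n\<^esub> eta x [^]\<^bsub>ZX_lvl K n\<^esub> a"
          by (simp add: eta_int_pow[OF x] c'_def a_def fun_eq_iff)
        show ?thesis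
          unfolding split
          using insert.IH c' pow eta[OF x] hom_mult[OF \<phi> c'(1) pow] hom_mult[OF \<psi> c'(1) pow]
            group_hom.hom_int_pow[OF gh(1) eta_in_ZX[OF x]] group_hom.hom_int_pow[OF gh(2) eta_in_ZX[OF x]]
          by simp
      qed
    qed
  qed
  then show ?thesis using c by (auto simp: ZX_carrier_iff)
qed

lemma lin_eta: "lin f (eta x) = eta (f x)"
proof
  fix y
  have "{z. eta x z \<noteq> 0 \<and> f z = y} = (if f x = y then {x} else {})" by (auto simp: eta_def)
  then show "lin f (eta x) y = eta (f x) y" by (simp add: lin_def eta_def)
qed

lemma lin_hom:
  assumes f: "\<And>x. x \<in> simp K m \<Longrightarrow> f x \<in> simp K n"
  shows "lin f \<in> hom (ZX_lvl K m) (ZX_lvl K n)"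
proof (rule homI)
  fix c assume c: "c \<in> carrier (ZX_lvl K m)"
  have "lin f c y = 0" if "y \<notin> f ` {x. c x \<noteq> 0}" for y
  proof -
    have empty: "{x. c x \<noteq> 0 \<and> f x = y} = {}" using that by auto
    show ?thesis unfolding lin_def empty by simp
  qed
  then have "{y. lin f c y \<noteq> 0} \<subseteq> f ` {x. c x \<noteq> 0}"
    by blast
  moreover have "f ` {x. c x \<noteq> 0} \<subseteq> simp K n" "finite (f ` {x. c x \<noteq> 0})"
    using c f by (auto simp: ZX_carrier_iff)
  ultimately show "lin f c \<in> carrier (ZX_lvl K n)"
    by (auto simp: ZX_carrier_iff intro: finite_subset)
next
  fix c c' assume c: "c \<in> carrier (ZX_lvl K m)" and c': "c' \<in> carrier (ZX_lvl K m)"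
  define T where "T = {x. c x \<noteq> 0} \<union> {x. c' x \<noteq> 0}"
  have T: "finite T" using c c' by (auto simp: T_def ZX_carrier_iff)
  have lin_T: "lin f e y = (\<Sum>x\<in>{x\<in>T. f x = y}. e x)" if "{x. e x \<noteq> 0} \<subseteq> T" for e y
    unfolding lin_def using T that by (intro sum.mono_neutral_left) auto
  have supp: "{x. c x \<noteq> 0} \<subseteq> T" "{x. c' x \<noteq> 0} \<subseteq> T" "{x. c x + c' x \<noteq> 0} \<subseteq> T"
    by (auto simp: T_def)
  show "lin f (c \<otimes>\<^bsub>ZX_lvl K m\<^esub> c') = lin f c \<otimes>\<^bsub>ZX_lvl K n\<^esub> lin f c'"
    by (simp add: fun_eq_iff lin_T[OF supp(1)] lin_T[OF supp(2)] lin_T[OF supp(3)] sum.distrib)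
qed

lemma lin_lin_eq:
  assumes "\<And>x. x \<in> simp K a \<Longrightarrow> g x \<in> simp K b" "\<And>x. x \<in> simp K b \<Longrightarrow> f x \<in> simp K e"
    and "\<And>x. x \<in> simp K a \<Longrightarrow> g' x \<in> simp K b'" "\<And>x. x \<in> simp K b' \<Longrightarrow> f' x \<in> simp K e"
    and "\<And>x. x \<in> simp K a \<Longrightarrow> f (g x) = f' (g' x)"
    and "c \<in> carrier (ZX_lvl K a)"
  shows "lin f (lin g c) = lin f' (lin g' c)"
proof -
  have "(lin f \<circ> lin g) c = (lin f' \<circ> lin g') c"
    by (rule ZX_hom_eqI[OF ZX_lvl.is_group hom_compose[OF lin_hom lin_hom] hom_compose[OF lin_hom lin_hom]])
      (use assms in \<open>simp_all add: lin_eta\<close>)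
  then show ?thesis by simp
qed

lemma lin_id:
  assumes c: "c \<in> carrier (ZX_lvl K n)"
  shows "lin (\<lambda>x. x) c = c"
proof -
  have lin: "lin (\<lambda>x. x) \<in> hom (ZX_lvl K n) (ZX_lvl K n)" by (rule lin_hom)
  have id: "(\<lambda>c. c) \<in> hom (ZX_lvl K n) (ZX_lvl K n)" by (rule homI) simp_all
  show ?thesis
    using ZX_hom_eqI[OF ZX_lvl.is_group lin id _ c] by (simp add: lin_eta)
qed

lemma lin_lin_id:
  assumes "\<And>x. x \<in> simp K a \<Longrightarrow> g x \<in> simp K b" "\<And>x. x \<in> simp K b \<Longrightarrow> f x \<in> simp K a"
    and "\<And>x. x \<in> simp K a \<Longrightarrow> f (g x) = x" and c: "c \<in> carrier (ZX_lvl K a)"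
  shows "lin f (lin g c) = c"
proof -
  have "lin f (lin g c) = lin (\<lambda>x. x) (lin (\<lambda>x. x) c)"
    by (rule lin_lin_eq) (use assms in auto)
  then show ?thesis using lin_id[OF c] by simp
qed

lemma lvl_ZX [simp]: "lvl (ZX K) n = ZX_lvl K n"
  and sface_ZX [simp]: "sface (ZX K) n i = lin (face K n i)"
  and sdegen_ZX [simp]: "sdegen (ZX K) n i = lin (degen K n i)"
  by (simp_all add: ZX_def)

context
  fixes K :: "'a tcx"
  assumes sset: "is_sset (simp K) (face K) (degen K)"
begin

lemma lin_face_hom: "i \<le> Suc n \<Longrightarrow> lin (face K n i) \<in> hom (ZX_lvl K (Suc n)) (ZX_lvl K n)"
  by (rule lin_hom) (rule sset_face_closed[OF sset])

lemma lin_degen_hom: "i \<le> n \<Longrightarrow> lin (degen K n i) \<in> hom (ZX_lvl K n) (ZX_lvl K (Suc n))"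
  by (rule lin_hom) (rule sset_degen_closed[OF sset])

lemma simplicial_ab_group_ZX: "simplicial_ab_group (ZX K)"
proof
  note closed = sset_face_closed[OF sset] sset_degen_closed[OF sset]
  show "is_sAbGrp (ZX K)"
    unfolding is_sAbGrp_def is_sset_def lvl_ZX sface_ZX sdegen_ZX
  proof (intro conjI allI impI)
    fix n i j :: nat and c
    show "comm_group (ZX_lvl K n)" by (rule comm_group_ZX_lvl)
    show "i \<le> Suc n \<Longrightarrow> lin (face K n i) \<in> hom (ZX_lvl K (Suc n)) (ZX_lvl K n)"
      by (rule lin_face_hom)
    show "i \<le> n \<Longrightarrow> lin (degen K n i) \<in> hom (ZX_lvl K n) (ZX_lvl K (Suc n))"
      by (rule lin_degen_hom)
    show "i \<le> Suc n \<Longrightarrow> c \<in> carrier (ZX_lvl K (Suc n)) \<Longrightarrow> lin (face K n i) c \<in> carrier (ZX_lvl K n)"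
      by (rule hom_in_carrier[OF lin_face_hom])
    show "i \<le> n \<Longrightarrow> c \<in> carrier (ZX_lvl K n) \<Longrightarrow> lin (degen K n i) c \<in> carrier (ZX_lvl K (Suc n))"
      by (rule hom_in_carrier[OF lin_degen_hom])
    show "i < j \<Longrightarrow> j \<le> Suc (Suc n) \<Longrightarrow> c \<in> carrier (ZX_lvl K (Suc (Suc n))) \<Longrightarrow>
        lin (face K n i) (lin (face K (Suc n) j) c) = lin (face K n (j - 1)) (lin (face K (Suc n) i) c)"
      by (rule lin_lin_eq) (auto intro: closed simp: sset_face_face[OF sset])
    show "i < j \<Longrightarrow> j \<le> Suc n \<Longrightarrow> c \<in> carrier (ZX_lvl K (Suc n)) \<Longrightarrow>
        lin (face K (Suc n) i) (lin (degen K (Suc n) j) c) = lin (degen K n (j - 1)) (lin (face K n i) c)"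
      by (rule lin_lin_eq) (auto intro: closed simp: sset_face_degen_less[OF sset])
    show "j \<le> n \<Longrightarrow> c \<in> carrier (ZX_lvl K n) \<Longrightarrow> lin (face K n j) (lin (degen K n j) c) = c"
      by (rule lin_lin_id) (auto intro: closed simp: sset_face_degen_same[OF sset])
    show "j \<le> n \<Longrightarrow> c \<in> carrier (ZX_lvl K n) \<Longrightarrow> lin (face K n (Suc j)) (lin (degen K n j) c) = c"
      by (rule lin_lin_id) (auto intro: closed simp: sset_face_Suc_degen[OF sset])
    show "j \<le> n \<Longrightarrow> Suc j < i \<Longrightarrow> i \<le> Suc (Suc n) \<Longrightarrow> c \<in> carrier (ZX_lvl K (Suc n)) \<Longrightarrow>
        lin (face K (Suc n) i) (lin (degen K (Suc n) j) c) = lin (degen K n j) (lin (face K n (i - 1)) c)"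
      by (rule lin_lin_eq) (auto intro: closed simp: sset_face_degen_greater[OF sset])
    show "i \<le> j \<Longrightarrow> j \<le> n \<Longrightarrow> c \<in> carrier (ZX_lvl K n) \<Longrightarrow>
        lin (degen K (Suc n) i) (lin (degen K n j) c) = lin (degen K (Suc n) (Suc j)) (lin (degen K n i) c)"
      by (rule lin_lin_eq) (auto intro: closed simp: sset_degen_degen[OF sset])
  qed
qed

end

definition lin_ext :: "'c sab \<Rightarrow> (nat \<Rightarrow> 'a \<Rightarrow> 'c) \<Rightarrow> nat \<Rightarrow> ('a \<Rightarrow> int) \<Rightarrow> 'c" where
  "lin_ext A f n c = finprod (lvl A n) (\<lambda>x. f n x [^]\<^bsub>lvl A n\<^esub> c x) {x. c x \<noteq> 0}"

context simplicial_ab_group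
begin

lemma lin_ext_hom:
  assumes f: "\<And>x. x \<in> simp K n \<Longrightarrow> f n x \<in> carrier (G n)"
  shows "lin_ext A f n \<in> hom (ZX_lvl K n) (G n)"
proof (rule homI)
  fix c assume "c \<in> carrier (ZX_lvl K n)"
  then show "lin_ext A f n c \<in> carrier (G n)"
    unfolding lin_ext_def using f by (auto simp: ZX_carrier_iff intro!: G.finprod_closed)
next
  fix c c' assume c: "c \<in> carrier (ZX_lvl K n)" and c': "c' \<in> carrier (ZX_lvl K n)"
  define T where "T = {x. c x \<noteq> 0} \<union> {x. c' x \<noteq> 0}"
  have T: "finite T" "T \<subseteq> simp K n" using c c' by (auto simp: T_def ZX_carrier_iff)
  have lin_ext_T: "lin_ext A f n e = finprod (G n) (\<lambda>x. f n x [^]\<^bsub>G n\<^esub> e x) T"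
    if "{x. e x \<noteq> 0} \<subseteq> T" for e
    unfolding lin_ext_def using T that f by (intro G.finprod_mono_neutral_cong_left) auto
  have "lin_ext A f n (c \<otimes>\<^bsub>ZX_lvl K n\<^esub> c') = finprod (G n) (\<lambda>x. f n x [^]\<^bsub>G n\<^esub> (c x + c' x)) T"
    by (simp add: lin_ext_T T_def subset_eq)
  also have "\<dots> = finprod (G n) (\<lambda>x. f n x [^]\<^bsub>G n\<^esub> c x \<otimes>\<^bsub>G n\<^esub> f n x [^]\<^bsub>G n\<^esub> c' x) T"
    using T f by (intro G.finprod_cong') (auto simp: G.int_pow_mult)
  also have "\<dots> = lin_ext A f n c \<otimes>\<^bsub>G n\<^esub> lin_ext A f n c'"
    using T f by (simp add: lin_ext_T T_def subset_eq)
  finally show "lin_ext A f n (c \<otimes>\<^bsub>ZX_lvl K n\<^esub> c') = lin_ext A f n c \<otimes>\<^bsub>G n\<^esub> lin_ext A f n c'" .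
qed

lemma lin_ext_eta: "f n x \<in> carrier (G n) \<Longrightarrow> lin_ext A f n (eta x) = f n x"
proof -
  have "{y. eta x y \<noteq> 0} = {x}" by (auto simp: eta_def)
  then show "f n x \<in> carrier (G n) \<Longrightarrow> ?thesis" by (simp add: lin_ext_def eta_def)
qed

lemma sAb_hom_lin_ext:
  assumes sset: "is_sset (simp K) (face K) (degen K)"
    and f: "is_smap (simp K) (face K) (degen K) (\<lambda>n. carrier (G n)) d s f"
  shows "sAb_hom (ZX K) A (lin_ext A f)"
proof -
  have f_closed: "\<And>n x. x \<in> simp K n \<Longrightarrow> f n x \<in> carrier (G n)"
    using f by (simp add: is_smap_def)
  have hom: "lin_ext A f n \<in> hom (ZX_lvl K n) (G n)" for n
    using f_closed by (rule lin_ext_hom)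
  have "lin_ext A f n (lin (face K n i) c) = d n i (lin_ext A f (Suc n) c)"
    if "i \<le> Suc n" "c \<in> carrier (ZX_lvl K (Suc n))" for n i c
    using ZX_hom_eqI[OF G.is_group hom_compose[OF lin_face_hom[OF sset] hom]
        hom_compose[OF hom face_hom[OF that(1)]] _ that(2)] that f f_closed sset_face_closed[OF sset]
    by (simp add: lin_eta lin_ext_eta is_smap_def)
  moreover have "lin_ext A f (Suc n) (lin (degen K n i) c) = s n i (lin_ext A f n c)"
    if "i \<le> n" "c \<in> carrier (ZX_lvl K n)" for n i c
    using ZX_hom_eqI[OF G.is_group hom_compose[OF lin_degen_hom[OF sset] hom]
        hom_compose[OF hom degen_hom[OF that(1)]] _ that(2)] that f f_closed sset_degen_closed[OF sset]
    by (simp add: lin_eta lin_ext_eta is_smap_def)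
  ultimately show ?thesis
    by (simp add: sAb_hom_def is_smap_def hom hom_in_carrier[OF hom])
qed

end

locale simplicial_T_complex =
  fixes K :: "'a tcx"
  assumes is_sTCom: "is_sTCom K"
begin

lemma sset: "is_sset (simp K) (face K) (degen K)"
  using is_sTCom by (simp add: is_sTCom_def)

lemma thin_simp: "x \<in> thin K n \<Longrightarrow> x \<in> simp K n"
  using is_sTCom by (auto simp: is_sTCom_def)

lemma thin_0: "thin K 0 = {}"
  using is_sTCom by (simp add: is_sTCom_def)

lemma thin_filler_unique: "is_horn K m k h \<Longrightarrow> \<exists>!x. is_filler K m k h x \<and> x \<in> thin K (Suc m)"
  using is_sTCom unfolding is_sTCom_def by blast

lemma fill_thin_filler:
  assumes "is_horn K m k h"
  shows "is_filler K m k h (fill K m k h)" "fill K m k h \<in> thin K (Suc m)"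
  using theI'[OF thin_filler_unique[OF assms]] by (simp_all add: fill_def)

sublocale ZX: simplicial_ab_group "ZX K"
  by (rule simplicial_ab_group_ZX[OF sset])

lemma horn_eta: "is_horn K m k h \<Longrightarrow> is_horn (U_sT (ZX K)) m k (\<lambda>i. eta (h i))"
  by (auto simp: is_horn_def U_sT_def eta_in_ZX lin_eta)

lemma relgen_in_ZX: "relgen K n \<subseteq> carrier (ZX_lvl K n)"
proof
  fix c assume "c \<in> relgen K n"
  then obtain m k h where mkh: "n = Suc m" "is_horn K m k h"
    "c = (\<lambda>y. fill (U_sT (ZX K)) m k (\<lambda>i. eta (h i)) y - eta (fill K m k h) y)"
    unfolding relgen_def by blast
  have "fill (U_sT (ZX K)) m k (\<lambda>i. eta (h i)) \<in> carrier (ZX_lvl K n)"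
    using ZX.degen_sums_carrier[OF ZX.fill_U_sT(1)[OF horn_eta[OF mkh(2)]]] mkh(1) by simp
  moreover have "eta (fill K m k h) \<in> carrier (ZX_lvl K n)"
    using fill_thin_filler(1)[OF mkh(2)] mkh(1) by (simp add: is_filler_def eta_in_ZX)
  moreover from calculation have "c = fill (U_sT (ZX K)) m k (\<lambda>i. eta (h i)) \<otimes>\<^bsub>ZX_lvl K n\<^esub>
      inv\<^bsub>ZX_lvl K n\<^esub> eta (fill K m k h)"
    by (simp add: mkh(3) ZX_inv)
  ultimately show "c \<in> carrier (ZX_lvl K n)"
    by (metis ZX_lvl.m_closed ZX_lvl.inv_closed)
qed

lemma Nsub_eq: "Nsub K n = \<Inter> {S n | S. simplicial_subgroup (ZX K) S \<and> (\<forall>p. relgen K p \<subseteq> S p)}"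
  by (simp add: Nsub_def simplicial_subgroup_def)

lemma Nsub_least: "simplicial_subgroup (ZX K) S \<Longrightarrow> (\<And>p. relgen K p \<subseteq> S p) \<Longrightarrow> Nsub K n \<subseteq> S n"
  unfolding Nsub_eq by blast

lemma simplicial_subgroup_Nsub: "simplicial_subgroup (ZX K) (Nsub K)"
proof -
  have "simplicial_subgroup (ZX K) (\<lambda>n. carrier (ZX_lvl K n))"
    by (simp add: simplicial_subgroup_def ZX_lvl.subgroup_self
        hom_in_carrier[OF lin_face_hom[OF sset]] hom_in_carrier[OF lin_degen_hom[OF sset]])
  then have nonempty: "{S n | S. simplicial_subgroup (ZX K) S \<and> (\<forall>p. relgen K p \<subseteq> S p)} \<noteq> {}" for n
    using relgen_in_ZX by blast
  show ?thesis
    unfolding simplicial_subgroup_def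
  proof (intro conjI allI impI)
    show "subgroup (Nsub K n) (lvl (ZX K) n)" for n
      unfolding Nsub_eq lvl_ZX using nonempty
      by (intro ZX_lvl.subgroups_Inter) (auto simp: simplicial_subgroup_def)
    show "sface (ZX K) n i c \<in> Nsub K n" if "i \<le> Suc n" "c \<in> Nsub K (Suc n)" for n i c
      using that unfolding Nsub_eq simplicial_subgroup_def by blast
    show "sdegen (ZX K) n i c \<in> Nsub K (Suc n)" if "i \<le> n" "c \<in> Nsub K n" for n i c
      using that unfolding Nsub_eq simplicial_subgroup_def by blast
  qed
qed

lemma relgen_Nsub: "relgen K n \<subseteq> Nsub K n"
  unfolding Nsub_eq by blast

sublocale Q: simplicial_quotient "ZX K" "Nsub K"
  by unfold_locales (rule simplicial_subgroup_Nsub)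

lemma subgroup_Nsub: "subgroup (Nsub K n) (ZX_lvl K n)"
  using Q.subgroup by simp

lemma Ab_sT_eq: "Ab_sT K = quotient_sab (ZX K) (Nsub K)"
  by (simp add: Ab_sT_def quotient_sab_def)

lemma Ab_sT_carrier: "(\<lambda>c. Nsub K n #>\<^bsub>ZX_lvl K n\<^esub> c) ` carrier (ZX_lvl K n) = carrier (lvl (Ab_sT K) n)"
  using Q.quotient_carrier by (simp add: Ab_sT_eq)

lemma Ab_sT_face_coset:
  "i \<le> Suc n \<Longrightarrow> c \<in> carrier (ZX_lvl K (Suc n)) \<Longrightarrow>
    sface (Ab_sT K) n i (Nsub K (Suc n) #>\<^bsub>ZX_lvl K (Suc n)\<^esub> c) = Nsub K n #>\<^bsub>ZX_lvl K n\<^esub> lin (face K n i) c"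
  using Q.quotient_face_coset by (simp add: Ab_sT_eq)

lemma Ab_sT_degen_coset:
  "i \<le> n \<Longrightarrow> c \<in> carrier (ZX_lvl K n) \<Longrightarrow>
    sdegen (Ab_sT K) n i (Nsub K n #>\<^bsub>ZX_lvl K n\<^esub> c) = Nsub K (Suc n) #>\<^bsub>ZX_lvl K (Suc n)\<^esub> lin (degen K n i) c"
  using Q.quotient_degen_coset by (simp add: Ab_sT_eq)

lemma is_sAbGrp_Ab_sT: "is_sAbGrp (Ab_sT K)"
  unfolding Ab_sT_eq by (rule Q.is_sAbGrp_quotient)

text \<open>
  A thin simplex is the thin filler of its own 0-horn, so modulo Nsub its generator equals the
  thin filler in Z[K] of the corresponding horn, which is a sum of degenerate simplices.
\<close>

lemma ab_unit_thin:
  assumes x: "x \<in> thin K n"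
  shows "ab_unit K n x \<in> degen_sums (Ab_sT K) n"
proof -
  obtain m where m: "n = Suc m" using x thin_0 by (cases n) auto
  have xs: "x \<in> simp K (Suc m)" using x thin_simp m by auto
  define h where "h i = face K m i x" for i
  have horn: "is_horn K m 0 h"
    using xs by (auto simp: is_horn_def h_def sset_face_closed[OF sset] sset_face_face[OF sset])
  have "is_filler K m 0 h x"
    using xs by (simp add: is_filler_def h_def)
  then have "fill K m 0 h = x"
    unfolding fill_def using thin_filler_unique[OF horn] x m by (intro the1_equality) auto
  define F where "F = fill (U_sT (ZX K)) m 0 (\<lambda>i. eta (h i))"
  have F: "F \<in> degen_sums (ZX K) n"
    using ZX.fill_U_sT(1)[OF horn_eta[OF horn]] m by (simp add: F_def)
  have Fc: "F \<in> carrier (ZX_lvl K n)"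
    using ZX.degen_sums_carrier[OF F] by simp
  have ec: "eta x \<in> carrier (ZX_lvl K n)"
    using eta_in_ZX[OF xs] m by simp
  have "F \<otimes>\<^bsub>ZX_lvl K n\<^esub> inv\<^bsub>ZX_lvl K n\<^esub> eta x \<in> relgen K n"
    using \<open>fill K m 0 h = x\<close> horn m ec by (auto simp: relgen_def ZX_inv F_def)
  then have "F \<in> Nsub K n #>\<^bsub>ZX_lvl K n\<^esub> eta x"
    using relgen_Nsub subgroup.rcos_module_rev[OF subgroup_Nsub ZX_lvl.is_group ec Fc] by auto
  then have "ab_unit K n x = Nsub K n #>\<^bsub>ZX_lvl K n\<^esub> F"
    unfolding ab_unit_def using ZX_lvl.repr_independence[OF _ ec subgroup_Nsub] by simp
  then show ?thesis
    using ZX.sAb_hom_degen_sums[OF Q.sAb_hom_coset F] by (simp add: Ab_sT_eq)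
qed

lemma sTCom_hom_ab_unit: "sTCom_hom K (U_sT (Ab_sT K)) (ab_unit K)"
  unfolding sTCom_hom_def is_smap_def
proof (intro conjI allI impI ballI)
  fix n x assume "x \<in> simp K n"
  then show "ab_unit K n x \<in> simp (U_sT (Ab_sT K)) n"
    using Ab_sT_carrier eta_in_ZX by (force simp: U_sT_def ab_unit_def)
next
  fix n i x assume "i \<le> Suc n" "x \<in> simp K (Suc n)"
  then show "ab_unit K n (face K n i x) = face (U_sT (Ab_sT K)) n i (ab_unit K (Suc n) x)"
    by (simp add: U_sT_def ab_unit_def Ab_sT_face_coset eta_in_ZX lin_eta)
next
  fix n i x assume "i \<le> n" "x \<in> simp K n"
  then show "ab_unit K (Suc n) (degen K n i x) = degen (U_sT (Ab_sT K)) n i (ab_unit K n x)"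
    by (simp add: U_sT_def ab_unit_def Ab_sT_degen_coset eta_in_ZX lin_eta)
next
  fix n x assume "x \<in> thin K n"
  then show "ab_unit K n x \<in> thin (U_sT (Ab_sT K)) n"
    by (simp add: U_sT_def ab_unit_thin)
qed

lemma Ab_sT_hom_eqI:
  assumes A: "is_sAbGrp A" and g: "sAb_hom (Ab_sT K) A g" and g': "sAb_hom (Ab_sT K) A g'"
    and unit: "\<And>n x. x \<in> simp K n \<Longrightarrow> g n (ab_unit K n x) = g' n (ab_unit K n x)"
    and y: "y \<in> carrier (lvl (Ab_sT K) n)"
  shows "g n y = g' n y"
proof -
  define q where "q c = Nsub K n #>\<^bsub>ZX_lvl K n\<^esub> c" for c
  obtain c where c: "c \<in> carrier (ZX_lvl K n)" "y = q c"
    using y Ab_sT_carrier unfolding q_def by blast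
  have q: "q \<in> hom (ZX_lvl K n) (lvl (Ab_sT K) n)"
    using Q.coset_hom by (simp add: Ab_sT_eq q_def[abs_def])
  have grp: "group (lvl A n)" using A by (simp add: is_sAbGrp_def comm_group_def)
  have "(g n \<circ> q) c = (g' n \<circ> q) c"
  proof (rule ZX_hom_eqI[OF grp hom_compose[OF q] hom_compose[OF q] _ c(1)])
    show "g n \<in> hom (lvl (Ab_sT K) n) (lvl A n)" "g' n \<in> hom (lvl (Ab_sT K) n) (lvl A n)"
      using g g' by (simp_all add: sAb_hom_def)
    show "(g n \<circ> q) (eta x) = (g' n \<circ> q) (eta x)" if "x \<in> simp K n" for x
      using unit[OF that] by (simp add: ab_unit_def q_def)
  qed
  then show ?thesis using c(2) by simp
qed

end

section \<open>The universal property\<close>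

locale sTCom_to_sAb_map = simplicial_T_complex K + A: simplicial_ab_group A
  for K :: "'a tcx" and A :: "'c sab" +
  fixes f :: "nat \<Rightarrow> 'a \<Rightarrow> 'c"
  assumes sTCom_hom: "sTCom_hom K (U_sT A) f"
begin

lemma smap: "is_smap (simp K) (face K) (degen K) (\<lambda>n. carrier (lvl A n)) (sface A) (sdegen A) f"
  using sTCom_hom by (simp add: sTCom_hom_def U_sT_def)

lemma thin_degen_sums: "x \<in> thin K n \<Longrightarrow> f n x \<in> degen_sums A n"
  using sTCom_hom by (simp add: sTCom_hom_def U_sT_def)

lemma sAb_hom_lin_ext: "sAb_hom (ZX K) A (lin_ext A f)"
  by (rule A.sAb_hom_lin_ext[OF sset smap])

lemma lin_ext_eta: "x \<in> simp K n \<Longrightarrow> lin_ext A f n (eta x) = f n x"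
  using smap by (intro A.lin_ext_eta) (simp add: is_smap_def)

text \<open>
  Both terms of a relation are mapped to thin fillers of the horn f \<circ> h in U_sT A, which
  coincide by uniqueness of thin fillers.
\<close>

lemma lin_ext_relgen:
  assumes "c \<in> relgen K n"
  shows "lin_ext A f n c = \<one>\<^bsub>lvl A n\<^esub>"
proof -
  obtain m k h where n: "n = Suc m" and horn: "is_horn K m k h"
    and c: "c = (\<lambda>y. fill (U_sT (ZX K)) m k (\<lambda>i. eta (h i)) y - eta (fill K m k h) y)"
    using assms unfolding relgen_def by blast
  define F x where "F = fill (U_sT (ZX K)) m k (\<lambda>i. eta (h i))" and "x = fill K m k h"
  have F: "F \<in> degen_sums (ZX K) (Suc m)" "\<And>i. i \<le> Suc m \<Longrightarrow> i \<noteq> k \<Longrightarrow> lin (face K m i) F = eta (h i)"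
    using ZX.fill_U_sT[OF horn_eta[OF horn]] by (simp_all add: F_def)
  have Fc: "F \<in> carrier (ZX_lvl K (Suc m))"
    using ZX.degen_sums_carrier[OF F(1)] by simp
  have x: "is_filler K m k h x" "x \<in> thin K (Suc m)"
    using fill_thin_filler[OF horn] by (simp_all add: x_def)
  have xs: "x \<in> simp K (Suc m)" using x(1) by (simp add: is_filler_def)
  have "lin_ext A f (Suc m) F = f (Suc m) x"
  proof (rule A.degen_sums_eq_if_faces_eq)
    show "lin_ext A f (Suc m) F \<in> degen_sums A (Suc m)"
      by (rule ZX.sAb_hom_degen_sums[OF sAb_hom_lin_ext F(1)])
    show "f (Suc m) x \<in> degen_sums A (Suc m)" by (rule thin_degen_sums[OF x(2)])
    show "k \<le> Suc m" using horn by (simp add: is_horn_def)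
    show "\<forall>i\<le>Suc m. i \<noteq> k \<longrightarrow> sface A m i (lin_ext A f (Suc m) F) = sface A m i (f (Suc m) x)"
    proof (intro allI impI)
      fix i assume i: "i \<le> Suc m" "i \<noteq> k"
      have "sface A m i (lin_ext A f (Suc m) F) = lin_ext A f m (lin (face K m i) F)"
        using sAb_hom_lin_ext i Fc by (simp add: sAb_hom_def is_smap_def)
      also have "\<dots> = f m (h i)"
        using F(2)[OF i] horn i by (simp add: lin_ext_eta is_horn_def)
      also have "h i = face K m i x"
        using x(1) i by (simp add: is_filler_def)
      also have "f m (face K m i x) = sface A m i (f (Suc m) x)"
        using i smap xs by (simp add: is_smap_def)
      finally show "sface A m i (lin_ext A f (Suc m) F) = sface A m i (f (Suc m) x)" .
    qed
  qed
  moreover have "c = F \<otimes>\<^bsub>ZX_lvl K n\<^esub> inv\<^bsub>ZX_lvl K n\<^esub> eta x"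
    using eta_in_ZX[OF xs] n by (simp add: c F_def x_def ZX_inv)
  moreover have "group_hom (ZX_lvl K n) (lvl A n) (lin_ext A f n)"
    using sAb_hom_lin_ext by (simp add: sAb_hom_def group_hom_def group_hom_axioms_def)
  moreover have "f n x \<in> carrier (lvl A n)"
    using smap xs n by (simp add: is_smap_def)
  ultimately show ?thesis
    using n Fc eta_in_ZX[OF xs] lin_ext_eta[OF xs]
    by (simp add: group_hom.hom_mult group_hom.hom_inv del: ZX_mult)
qed

lemma lin_ext_Nsub: "c \<in> Nsub K n \<Longrightarrow> lin_ext A f n c = \<one>\<^bsub>lvl A n\<^esub>"
  using Nsub_least[OF A.simplicial_subgroup_kernel[OF ZX.is_sAbGrp sAb_hom_lin_ext]]
    relgen_in_ZX lin_ext_relgen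
  by (fastforce simp: kernel_def)

lemma sAb_hom_induced_lin_ext: "sAb_hom (Ab_sT K) A (induced_hom (lin_ext A f))"
  unfolding Ab_sT_eq
  by (rule Q.sAb_hom_induced[OF A.is_sAbGrp sAb_hom_lin_ext lin_ext_Nsub])

lemma induced_lin_ext_unit:
  assumes "x \<in> simp K n"
  shows "induced_hom (lin_ext A f) n (ab_unit K n x) = f n x"
proof -
  have "eta x \<in> carrier (lvl (ZX K) n)" using eta_in_ZX[OF assms] by simp
  then show ?thesis
    unfolding ab_unit_def lin_ext_eta[OF assms, symmetric]
    using Q.induced_hom_coset[OF A.is_sAbGrp sAb_hom_lin_ext lin_ext_Nsub] by simp
qed

lemma unique_factorization:
  "\<exists>g. sAb_hom (Ab_sT K) A g \<and> (\<forall>n. \<forall>x \<in> simp K n. g n (ab_unit K n x) = f n x) \<and>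
     (\<forall>g'. sAb_hom (Ab_sT K) A g' \<and> (\<forall>n. \<forall>x \<in> simp K n. g' n (ab_unit K n x) = f n x) \<longrightarrow>
        (\<forall>n. \<forall>y \<in> carrier (lvl (Ab_sT K) n). g' n y = g n y))"
  using sAb_hom_induced_lin_ext induced_lin_ext_unit Ab_sT_hom_eqI[OF A.is_sAbGrp]
  by (intro exI[of _ "induced_hom (lin_ext A f)"]) auto

end

theorem mainTheorem4:
  fixes K :: "'a tcx" and A :: "'c sab"
  assumes "is_sTCom K" and "is_sAbGrp A"
  shows "is_sAbGrp (Ab_sT K) \<and> sTCom_hom K (U_sT (Ab_sT K)) (ab_unit K) \<and>
    (\<forall>f. sTCom_hom K (U_sT A) f \<longrightarrow>
      (\<exists>g. sAb_hom (Ab_sT K) A g \<and> (\<forall>n. \<forall>x \<in> simp K n. g n (ab_unit K n x) = f n x) \<and>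
        (\<forall>g'. sAb_hom (Ab_sT K) A g' \<and> (\<forall>n. \<forall>x \<in> simp K n. g' n (ab_unit K n x) = f n x) \<longrightarrow>
           (\<forall>n. \<forall>y \<in> carrier (lvl (Ab_sT K) n). g' n y = g n y))))"
proof -
  have K: "simplicial_T_complex K" and A: "simplicial_ab_group A"
    using assms by (simp_all add: simplicial_T_complex_def simplicial_ab_group_def)
  have "sTCom_to_sAb_map K A f" if "sTCom_hom K (U_sT A) f" for f
    using K A that by (simp add: sTCom_to_sAb_map_def sTCom_to_sAb_map_axioms_def)
  then show ?thesis
    using simplicial_T_complex.is_sAbGrp_Ab_sT[OF K] simplicial_T_complex.sTCom_hom_ab_unit[OF K]
      sTCom_to_sAb_map.unique_factorization by blast
qed

end
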